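(* Let $\gamma\in\mathcal S_n$. Then $(\varepsilon,\varepsilon,\gamma;(12))\in\mathrm{Par}(n)$ if and only if the cycle structure of $\gamma$ is $2^r\cdot1^f$ for some integers $r\ge0$ and $f\ge1$; that is, $\gamma^2=\varepsilon$ and $\gamma$ has at least one fixed point.
   Context: A Latin square of order $n$ is an $n\times n$ array with rows, columns and symbols indexed by $[n]$, each symbol occurring once in each row and each column, with triple set $O(L)$. Permutations act on the right; $\varepsilon$ is the identity. A paratopism $(\alpha,\beta,\gamma;(12))$ maps $L$ to $L^\sigma$ with triple set $\{(y\beta,x\alpha,z\gamma):(x,y,z)\in O(L)\}$; it is an autoparatopism of $L$ if $L^\sigma=L$. $\mathrm{Par}(n)$ is the set of paratopisms that are autoparatopisms of at least one Latin square of order $n$. Cycle structure $c_1^{\lambda_1}\cdot c_2^{\lambda_2}\cdots$ means $\lambda_i$ cycles of length $c_i$, with fixed points counted as $1$-cycles. *)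

theory Defs
  imports "HOL-Combinatorics.Permutations"
begin

definition latin_square :: "nat \<Rightarrow> (nat \<times> nat \<times> nat) set \<Rightarrow> bool" where
  "latin_square n T \<longleftrightarrow>
     T \<subseteq> {1..n} \<times> {1..n} \<times> {1..n} \<and>
     (\<forall>x\<in>{1..n}. \<forall>y\<in>{1..n}. \<exists>!z. (x, y, z) \<in> T) \<and>
     (\<forall>x\<in>{1..n}. \<forall>z\<in>{1..n}. \<exists>!y. (x, y, z) \<in> T) \<and>
     (\<forall>y\<in>{1..n}. \<forall>z\<in>{1..n}. \<exists>!x. (x, y, z) \<in> T)"

text \<open>Image of a Latin square (triple set) under the paratopism
(alpha, beta, gamma; (12)); permutations act on the right, so x alpha = alpha x.\<close>
definition paratopism12 ::
  "(nat \<Rightarrow> nat) \<Rightarrow> (nat \<Rightarrow> nat) \<Rightarrow> (nat \<Rightarrow> nat) \<Rightarrow> (nat \<times> nat \<times> nat) set \<Rightarrow> (nat \<times> nat \<times> nat) set" where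
  "paratopism12 \<alpha> \<beta> \<gamma> T = {(\<beta> y, \<alpha> x, \<gamma> z) | x y z. (x, y, z) \<in> T}"

definition in_Par12 :: "nat \<Rightarrow> (nat \<Rightarrow> nat) \<Rightarrow> (nat \<Rightarrow> nat) \<Rightarrow> (nat \<Rightarrow> nat) \<Rightarrow> bool" where
  "in_Par12 n \<alpha> \<beta> \<gamma> \<longleftrightarrow> (\<exists>T. latin_square n T \<and> paratopism12 \<alpha> \<beta> \<gamma> T = T)"

end

theory Submission
  imports Defs
begin

text \<open>If (\<epsilon>, \<epsilon>, \<gamma>; (12)) fixes L, then L(y, x) = \<gamma>(L(x, y)). Applied twice this gives
  \<gamma>^2 = \<epsilon> on the symbols of a row, that is on all symbols, and every diagonal entry L(x, x) is a
  fixed point of \<gamma>.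

  Conversely, involutions with the same number r of 2-cycles are conjugate, and relabelling the
  symbols of L conjugates \<gamma>; so for every 2r < n it suffices to find one Latin square on
  {0, ..., n - 1} whose transpose is L followed by some involution with r 2-cycles. For
  n \<le> 4r + 2 the subtraction table of Z_(2r+1) is glued to an addition table of the remaining
  order; for larger n the addition table of Z_n is modified, by a parity trick when n is even
  and by refilling r triples of antidiagonals when n is odd.\<close>

section \<open>Involutions\<close>

lemma involution_swaps_lower_upper:
  fixes g :: "'a::linorder \<Rightarrow> 'a"
  assumes inv: "\<forall>x\<in>A. g x \<in> A \<and> g (g x) = x"
  shows "bij_betw g {x\<in>A. x < g x} {x\<in>A. g x < x}"
    and "bij_betw g {x\<in>A. g x < x} {x\<in>A. x < g x}"
  by (rule bij_betw_byWitness[where f' = g]; use inv in force)+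

lemma card_involution:
  fixes g :: "'a::linorder \<Rightarrow> 'a"
  assumes "finite A" and inv: "\<forall>x\<in>A. g x \<in> A \<and> g (g x) = x"
  shows "card A = card {x\<in>A. g x = x} + 2 * card {x\<in>A. x < g x}"
proof -
  have "A = {x\<in>A. g x = x} \<union> {x\<in>A. x < g x} \<union> {x\<in>A. g x < x}" by auto
  also have "card \<dots> = card {x\<in>A. g x = x} + card {x\<in>A. x < g x} + card {x\<in>A. g x < x}"
    using \<open>finite A\<close> by (subst card_Un_disjoint; auto)+
  finally have "card A = card {x\<in>A. g x = x} + card {x\<in>A. x < g x} + card {x\<in>A. g x < x}" .
  moreover have "card {x\<in>A. g x < x} = card {x\<in>A. x < g x}"
    using bij_betw_same_card[OF involution_swaps_lower_upper(1)[OF inv]] by simp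
  ultimately show ?thesis by simp
qed

lemma involutions_conjugate:
  fixes g1 :: "'a::linorder \<Rightarrow> 'a" and g2 :: "'b::linorder \<Rightarrow> 'b"
  assumes "finite A" "finite B"
    and inv1: "\<forall>x\<in>A. g1 x \<in> A \<and> g1 (g1 x) = x"
    and inv2: "\<forall>x\<in>B. g2 x \<in> B \<and> g2 (g2 x) = x"
    and "card A = card B"
    and card_lower: "card {x\<in>A. x < g1 x} = card {x\<in>B. x < g2 x}"
  obtains \<phi> where "bij_betw \<phi> A B" and "\<forall>x\<in>A. \<phi> (g1 x) = g2 (\<phi> x)"
proof -
  define F1 L1 U1 where "F1 = {x\<in>A. g1 x = x}" "L1 = {x\<in>A. x < g1 x}" "U1 = {x\<in>A. g1 x < x}"
  define F2 L2 U2 where "F2 = {x\<in>B. g2 x = x}" "L2 = {x\<in>B. x < g2 x}" "U2 = {x\<in>B. g2 x < x}"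
  have "card F1 = card F2"
    using card_involution[OF \<open>finite A\<close> inv1] card_involution[OF \<open>finite B\<close> inv2]
      \<open>card A = card B\<close> card_lower
    unfolding F1_L1_U1_def F2_L2_U2_def by linarith
  then obtain e where e: "bij_betw e F1 F2"
    using finite_same_card_bij[of F1 F2] \<open>finite A\<close> \<open>finite B\<close>
    unfolding F1_L1_U1_def F2_L2_U2_def by auto
  obtain h where h: "bij_betw h L1 L2"
    using finite_same_card_bij[OF _ _ card_lower] \<open>finite A\<close> \<open>finite B\<close>
    unfolding F1_L1_U1_def F2_L2_U2_def by auto
  define \<phi> where "\<phi> x = (if x \<in> F1 then e x else if x \<in> L1 then h x else g2 (h (g1 x)))" for x
  have "bij_betw \<phi> F1 F2"
    using e by (rule bij_betw_cong[THEN iffD1, rotated]) (simp add: \<phi>_def)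
  moreover have "bij_betw \<phi> L1 L2"
    using h by (rule bij_betw_cong[THEN iffD1, rotated]) (auto simp: \<phi>_def F1_L1_U1_def)
  moreover have "bij_betw \<phi> U1 U2"
  proof -
    have "bij_betw (g2 \<circ> h \<circ> g1) U1 U2"
      using involution_swaps_lower_upper[OF inv1] involution_swaps_lower_upper[OF inv2] h
      unfolding F1_L1_U1_def F2_L2_U2_def by (blast intro: bij_betw_trans)
    then show ?thesis
      by (rule bij_betw_cong[THEN iffD1, rotated]) (auto simp: \<phi>_def F1_L1_U1_def)
  qed
  ultimately have "bij_betw \<phi> (F1 \<union> L1 \<union> U1) (F2 \<union> L2 \<union> U2)"
    by (intro bij_betw_combine) (auto simp: F2_L2_U2_def)
  moreover have "F1 \<union> L1 \<union> U1 = A" "F2 \<union> L2 \<union> U2 = B"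
    unfolding F1_L1_U1_def F2_L2_U2_def by auto
  moreover have "\<phi> (g1 x) = g2 (\<phi> x)" if "x \<in> A" for x
  proof -
    have hL: "h y \<in> L2" if "y \<in> L1" for y using h that bij_betwE by blast
    consider "x \<in> F1" | "x \<in> L1" | "x \<in> U1" using \<open>x \<in> A\<close> unfolding F1_L1_U1_def by fastforce
    then show ?thesis
    proof cases
      case 1
      then show ?thesis using e bij_betwE[OF e] by (fastforce simp: \<phi>_def F1_L1_U1_def F2_L2_U2_def)
    next
      case 2
      then show ?thesis using inv1 by (auto simp: \<phi>_def F1_L1_U1_def)
    next
      case 3
      then have "g1 x \<in> L1" using inv1 unfolding F1_L1_U1_def by auto
      then show ?thesis using 3 hL inv2 by (auto simp: \<phi>_def F1_L1_U1_def F2_L2_U2_def)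
    qed
  qed
  ultimately show ?thesis using that by blast
qed

section \<open>Latin squares whose transpose is twisted by an involution\<close>

lemma latin_square_of_table:
  assumes range: "\<And>x y. x \<in> {1..n} \<Longrightarrow> y \<in> {1..n} \<Longrightarrow> L x y \<in> {1..n}"
    and rows: "\<And>x. x \<in> {1..n} \<Longrightarrow> inj_on (L x) {1..n}"
    and cols: "\<And>y. y \<in> {1..n} \<Longrightarrow> inj_on (\<lambda>x. L x y) {1..n}"
  shows "latin_square n {(x, y, L x y) | x y. x \<in> {1..n} \<and> y \<in> {1..n}}"
    (is "latin_square n ?T")
proof -
  have mem: "(x, y, z) \<in> ?T \<longleftrightarrow> x \<in> {1..n} \<and> y \<in> {1..n} \<and> z = L x y" for x y z
    by blast
  have row_onto: "z \<in> L x ` {1..n}" if "x \<in> {1..n}" "z \<in> {1..n}" for x z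
    using endo_inj_surj[of "{1..n}" "L x"] range rows that by blast
  have col_onto: "z \<in> (\<lambda>x. L x y) ` {1..n}" if "y \<in> {1..n}" "z \<in> {1..n}" for y z
    using endo_inj_surj[of "{1..n}" "\<lambda>x. L x y"] range cols that by blast
  show ?thesis
    unfolding latin_square_def
  proof (intro conjI ballI)
    show "?T \<subseteq> {1..n} \<times> {1..n} \<times> {1..n}"
      using range by blast
  next
    fix x y assume "x \<in> {1..n}" "y \<in> {1..n}"
    then show "\<exists>!z. (x, y, z) \<in> ?T" unfolding mem by blast
  next
    fix x z assume "x \<in> {1..n}" "z \<in> {1..n}"
    then obtain y where "y \<in> {1..n}" "z = L x y" using row_onto by blast
    then show "\<exists>!y. (x, y, z) \<in> ?T"
      unfolding mem using rows[OF \<open>x \<in> {1..n}\<close>] \<open>x \<in> {1..n}\<close> by (metis inj_on_eq_iff)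
  next
    fix y z assume "y \<in> {1..n}" "z \<in> {1..n}"
    then obtain x where "x \<in> {1..n}" "z = L x y" using col_onto by blast
    then show "\<exists>!x. (x, y, z) \<in> ?T"
      unfolding mem using cols[OF \<open>y \<in> {1..n}\<close>] \<open>y \<in> {1..n}\<close> by (metis inj_on_eq_iff)
  qed
qed

lemma in_Par12_of_table:
  assumes "\<gamma> permutes {1..n}"
    and range: "\<And>x y. x \<in> {1..n} \<Longrightarrow> y \<in> {1..n} \<Longrightarrow> L x y \<in> {1..n}"
    and rows: "\<And>x. x \<in> {1..n} \<Longrightarrow> inj_on (L x) {1..n}"
    and transpose: "\<And>x y. x \<in> {1..n} \<Longrightarrow> y \<in> {1..n} \<Longrightarrow> L y x = \<gamma> (L x y)"
  shows "in_Par12 n id id \<gamma>"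
proof -
  define T where "T = {(x, y, L x y) | x y. x \<in> {1..n} \<and> y \<in> {1..n}}"
  have "inj_on (\<lambda>x. L x y) {1..n}" if "y \<in> {1..n}" for y
  proof (rule inj_onI)
    fix x x' assume "x \<in> {1..n}" "x' \<in> {1..n}" "L x y = L x' y"
    then have "\<gamma> (L y x) = \<gamma> (L y x')"
      using transpose[OF \<open>y \<in> {1..n}\<close>] by metis
    then have "L y x = L y x'"
      using permutes_inj[OF \<open>\<gamma> permutes {1..n}\<close>] by (simp add: inj_eq)
    then show "x = x'"
      using rows[OF \<open>y \<in> {1..n}\<close>] \<open>x \<in> {1..n}\<close> \<open>x' \<in> {1..n}\<close> by (simp add: inj_on_eq_iff)
  qed
  then have "latin_square n T"
    unfolding T_def using range rows by (intro latin_square_of_table)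
  moreover have "paratopism12 id id \<gamma> T = T"
  proof (intro equalityI subsetI)
    fix t assume "t \<in> paratopism12 id id \<gamma> T"
    then obtain x y where "x \<in> {1..n}" "y \<in> {1..n}" "t = (y, x, \<gamma> (L x y))"
      unfolding paratopism12_def T_def by auto
    then show "t \<in> T" unfolding T_def using transpose[of x y] by auto
  next
    fix t assume "t \<in> T"
    then obtain x y where xy: "x \<in> {1..n}" "y \<in> {1..n}" "t = (x, y, L x y)"
      unfolding T_def by auto
    then have "t = (id x, id y, \<gamma> (L y x))" and "(y, x, L y x) \<in> T"
      using transpose[OF xy(2,1)] unfolding T_def by auto
    then show "t \<in> paratopism12 id id \<gamma> T" unfolding paratopism12_def by blast
  qed
  ultimately show ?thesis unfolding in_Par12_def by blast
qed

lemma in_Par12_imp_involution: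
  assumes "n \<ge> 1" and "\<gamma> permutes {1..n}" and "in_Par12 n id id \<gamma>"
  shows "\<gamma> \<circ> \<gamma> = id" and "\<exists>x\<in>{1..n}. \<gamma> x = x"
proof -
  obtain T where "latin_square n T" and fixed: "paratopism12 id id \<gamma> T = T"
    using assms(3) unfolding in_Par12_def by blast
  then have sub: "T \<subseteq> {1..n} \<times> {1..n} \<times> {1..n}"
    and cell: "\<And>x y. x \<in> {1..n} \<Longrightarrow> y \<in> {1..n} \<Longrightarrow> \<exists>!z. (x, y, z) \<in> T"
    and row: "\<And>x z. x \<in> {1..n} \<Longrightarrow> z \<in> {1..n} \<Longrightarrow> \<exists>!y. (x, y, z) \<in> T"
    unfolding latin_square_def by auto
  have transpose: "(y, x, \<gamma> z) \<in> T" if "(x, y, z) \<in> T" for x y z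
    using fixed that unfolding paratopism12_def by force
  have one: "1 \<in> {1..n}" using \<open>n \<ge> 1\<close> by simp
  have "\<gamma> (\<gamma> z) = z" for z
  proof (cases "z \<in> {1..n}")
    case True
    then obtain y where y: "(1, y, z) \<in> T" using row[OF one] by blast
    then have "y \<in> {1..n}" using sub by auto
    moreover have "(1, y, \<gamma> (\<gamma> z)) \<in> T" using transpose[OF transpose[OF y]] .
    ultimately show ?thesis using y cell[OF one] by blast
  next
    case False
    then show ?thesis using \<open>\<gamma> permutes {1..n}\<close> by (simp add: permutes_not_in)
  qed
  then show "\<gamma> \<circ> \<gamma> = id" by auto
  obtain z where z: "(1, 1, z) \<in> T" using cell[OF one one] by blast
  then have "\<gamma> z = z" using transpose[OF z] cell[OF one one] by blast
  moreover have "z \<in> {1..n}" using z sub by auto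
  ultimately show "\<exists>x\<in>{1..n}. \<gamma> x = x" by blast
qed

definition twisted_latin :: "nat \<Rightarrow> (nat \<Rightarrow> nat \<Rightarrow> nat) \<Rightarrow> (nat \<Rightarrow> nat) \<Rightarrow> bool" where
  "twisted_latin n l g \<longleftrightarrow>
     (\<forall>x<n. \<forall>y<n. l x y < n) \<and> (\<forall>x<n. inj_on (l x) {..<n}) \<and>
     (\<forall>x<n. \<forall>y<n. l y x = g (l x y)) \<and> (\<forall>s<n. g s < n \<and> g (g s) = s)"

lemma twisted_latinI:
  assumes "\<And>x y. x < n \<Longrightarrow> y < n \<Longrightarrow> l x y < n"
    and "\<And>x. x < n \<Longrightarrow> inj_on (l x) {..<n}"
    and "\<And>x y. x < n \<Longrightarrow> y < n \<Longrightarrow> l y x = g (l x y)"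
    and "\<And>s. s < n \<Longrightarrow> g s < n" and "\<And>s. s < n \<Longrightarrow> g (g s) = s"
  shows "twisted_latin n l g"
  unfolding twisted_latin_def by (intro conjI allI impI) (rule assms; assumption)+

lemma in_Par12_of_twisted_latin:
  assumes "twisted_latin n l g" and "\<gamma> permutes {1..n}" and "\<gamma> \<circ> \<gamma> = id"
    and "card {x\<in>{1..n}. x < \<gamma> x} = card {s. s < n \<and> s < g s}"
  shows "in_Par12 n id id \<gamma>"
proof -
  have range: "\<And>x y. x < n \<Longrightarrow> y < n \<Longrightarrow> l x y < n"
    and rows: "\<And>x. x < n \<Longrightarrow> inj_on (l x) {..<n}"
    and transpose: "\<And>x y. x < n \<Longrightarrow> y < n \<Longrightarrow> l y x = g (l x y)"
    and g: "\<And>s. s < n \<Longrightarrow> g s < n \<and> g (g s) = s"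
    using assms(1) unfolding twisted_latin_def by blast+
  have inv_g: "\<forall>s\<in>{..<n}. g s \<in> {..<n} \<and> g (g s) = s" using g by auto
  have inv_\<gamma>: "\<forall>x\<in>{1..n}. \<gamma> x \<in> {1..n} \<and> \<gamma> (\<gamma> x) = x"
    using permutes_in_image[OF assms(2)] assms(3) by (simp add: pointfree_idE)
  have lower: "card {s\<in>{..<n}. s < g s} = card {x\<in>{1..n}. x < \<gamma> x}"
    using assms(4) by (simp add: lessThan_def)
  have "card {..<n} = card {1..n}" by simp
  then obtain \<phi> where \<phi>: "bij_betw \<phi> {..<n} {1..n}"
    and conj: "\<forall>s\<in>{..<n}. \<phi> (g s) = \<gamma> (\<phi> s)"
    using involutions_conjugate[OF finite_lessThan finite_atLeastAtMost inv_g inv_\<gamma> _ lower] by blast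
  define L where "L x y = \<phi> (l (x - 1) (y - 1))" for x y
  show ?thesis
  proof (rule in_Par12_of_table[OF assms(2), where L = L])
    show "L x y \<in> {1..n}" if "x \<in> {1..n}" "y \<in> {1..n}" for x y
      using bij_betwE[OF \<phi>] range that unfolding L_def by auto
    show "inj_on (L x) {1..n}" if x: "x \<in> {1..n}" for x
    proof (rule inj_onI)
      fix y y' assume y: "y \<in> {1..n}" and y': "y' \<in> {1..n}" and "L x y = L x y'"
      then have "l (x - 1) (y - 1) = l (x - 1) (y' - 1)"
        using inj_onD[OF bij_betw_imp_inj_on[OF \<phi>]] range x unfolding L_def by auto
      moreover have "x - 1 < n" "y - 1 < n" "y' - 1 < n" using x y y' by auto
      ultimately have "y - 1 = y' - 1"
        using inj_onD[OF rows[of "x - 1"]] by blast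
      then show "y = y'" using y y' by auto
    qed
    show "L y x = \<gamma> (L x y)" if "x \<in> {1..n}" "y \<in> {1..n}" for x y
    proof -
      have "x - 1 < n" "y - 1 < n" using that by auto
      then show ?thesis
        unfolding L_def transpose[OF \<open>x - 1 < n\<close> \<open>y - 1 < n\<close>]
        using conj range by blast
    qed
  qed
qed

lemma mod_less_double: "a < 2 * m \<Longrightarrow> a mod m = (if a < m then a else a - (m::nat))"
  by (simp add: le_mod_geq)

lemma inj_on_add_mod: "inj_on (\<lambda>y. (x + y) mod k) {a..<a + (k::nat)}"
proof -
  have "y1 = y2" if "y1 \<le> y2" "y2 < a + k" "a \<le> y1" "(x + y1) mod k = (x + y2) mod k"
    for y1 y2 :: nat
  proof -
    have "k dvd y2 - y1" using that mod_eq_dvd_iff_nat[of "x + y1" "x + y2" k] by simp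
    moreover have "y2 - y1 < k" using that by linarith
    ultimately have "y2 - y1 = 0" by (metis gr0I nat_dvd_not_less)
    then show ?thesis using \<open>y1 \<le> y2\<close> by simp
  qed
  then show ?thesis
    by (intro inj_onI) (metis atLeastLessThan_iff nat_le_linear)
qed

lemma inj_on_add_mod_lessThan: "inj_on (\<lambda>y. (x + y) mod n) {..<n::nat}"
  using inj_on_add_mod[of x n 0] by (simp add: atLeast0LessThan)

lemma even_mod_even_iff: "even n \<Longrightarrow> even (a mod n) \<longleftrightarrow> even (a::nat)"
  by (metis div_mult_mod_eq even_add even_mult_iff)

lemma mod_double_inj:
  assumes "odd m" "y1 < m" "y2 < m" "(2 * y1) mod m = (2 * y2) mod (m::nat)"
  shows "y1 = y2"
proof -
  have "2 * y1 < 2 * m" "2 * y2 < 2 * m" using assms by simp_all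
  then have "2 * y1 = 2 * y2 \<or> 2 * y1 + m = 2 * y2 \<or> 2 * y1 = 2 * y2 + m"
    using assms(4) by (simp add: mod_less_double split: if_splits)
  then show ?thesis using \<open>odd m\<close> by presburger
qed

lemma neg_mod_eq:
  assumes "(a + b) mod m = (0::nat)"
  shows "(m - a mod m) mod m = b mod m"
proof (cases "a mod m = 0")
  case True
  then have "b mod m = 0" using assms mod_add_left_eq[of a m b] by simp
  with True show ?thesis by simp
next
  case False
  then have "0 < m" using assms by (cases "m = 0") auto
  have "(a mod m + b mod m) mod m = 0" using assms by (simp only: mod_add_eq)
  moreover have "a mod m + b mod m < 2 * m"
    using mod_less_divisor[OF \<open>0 < m\<close>, of a] mod_less_divisor[OF \<open>0 < m\<close>, of b] by linarith
  ultimately have "a mod m + b mod m = m" using False by (simp add: mod_less_double split: if_splits)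
  then have "m - a mod m = b mod m" by linarith
  then show ?thesis by simp
qed

lemma mod_shift_sum_cases:
  fixes n :: nat
  assumes "x < n" "y < n" "(x + y) mod n = 2 * a + j"
  shows "(x + n - a) mod n + (y + n - a) mod n = j \<or> (x + n - a) mod n + (y + n - a) mod n = j + n"
proof -
  have "0 < n" using assms(1) by simp
  have "x + y = n * ((x + y) div n) + 2 * a + j" using assms(3) div_mult_mod_eq[of "x + y" n]
    by (simp add: mult.commute)
  moreover have "2 * a + j < n" using assms(3) \<open>0 < n\<close> by (metis mod_less_divisor)
  ultimately have sum: "(x + n - a) + (y + n - a) = j + n * ((x + y) div n + 2)"
    by (simp add: algebra_simps)
  have "((x + n - a) mod n + (y + n - a) mod n) mod n = ((x + n - a) + (y + n - a)) mod n"
    by (rule mod_add_eq)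
  also have "\<dots> = j" using \<open>2 * a + j < n\<close> by (simp only: sum mod_mult_self2) simp
  finally have "((x + n - a) mod n + (y + n - a) mod n) mod n = j" .
  moreover have "(x + n - a) mod n + (y + n - a) mod n < 2 * n"
    using mod_less_divisor[OF \<open>0 < n\<close>, of "x + n - a"] mod_less_divisor[OF \<open>0 < n\<close>, of "y + n - a"]
    by linarith
  ultimately show ?thesis by (auto simp: mod_less_double split: if_splits)
qed

section \<open>The constructions\<close>

definition pair_swap :: "nat \<Rightarrow> nat \<Rightarrow> nat \<Rightarrow> nat" where
  "pair_swap c r s =
     (if s < 4 * r \<and> s mod 4 = c then s + 2
      else if s < 4 * r \<and> s mod 4 = c + 2 then s - 2 else s)"

lemma pair_swap_cases:
  assumes "c \<le> 1"
  obtains "s < 4 * r" "s mod 4 = c" "pair_swap c r s = s + 2"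
      "s + 2 < 4 * r" "(s + 2) mod 4 = c + 2"
    | "s < 4 * r" "s mod 4 = c + 2" "pair_swap c r s = s - 2"
      "s - 2 < 4 * r" "(s - 2) mod 4 = c"
    | "\<not> (s < 4 * r \<and> s mod 4 = c)" "\<not> (s < 4 * r \<and> s mod 4 = c + 2)" "pair_swap c r s = s"
proof -
  have s: "s = 4 * (s div 4) + s mod 4" by simp
  consider "s < 4 * r" "s mod 4 = c" | "s < 4 * r" "s mod 4 = c + 2"
    | "\<not> (s < 4 * r \<and> s mod 4 = c)" "\<not> (s < 4 * r \<and> s mod 4 = c + 2)"
    by blast
  then show ?thesis
  proof cases
    case 1
    have "(s + 2) mod 4 = (s mod 4 + 2) mod 4" by (simp only: mod_add_left_eq)
    then have "(s + 2) mod 4 = c + 2" using 1 \<open>c \<le> 1\<close> by simp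
    moreover have "s + 2 < 4 * r"
    proof -
      have "s div 4 < r" using 1 s by linarith
      then show ?thesis using 1 s \<open>c \<le> 1\<close> by linarith
    qed
    ultimately show ?thesis using that(1) 1 by (simp add: pair_swap_def)
  next
    case 2
    then have "s - 2 = 4 * (s div 4) + c" using s by linarith
    then have "(s - 2) mod 4 = c" using \<open>c \<le> 1\<close> by simp
    then show ?thesis using that(2) 2 \<open>c \<le> 1\<close> by (simp add: pair_swap_def)
  next
    case 3
    then have "pair_swap c r s = s" unfolding pair_swap_def by auto
    with 3 show ?thesis using that(3) by blast
  qed
qed

lemma pair_swap_swap: "c \<le> 1 \<Longrightarrow> pair_swap c r (pair_swap c r s) = s"
  by (cases rule: pair_swap_cases[of c s r]) (auto simp: pair_swap_def)

lemma inj_pair_swap: "c \<le> 1 \<Longrightarrow> inj (pair_swap c r)"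
  by (metis injI pair_swap_swap)

lemma pair_swap_less: "c \<le> 1 \<Longrightarrow> 4 * r \<le> n \<Longrightarrow> s < n \<Longrightarrow> pair_swap c r s < n"
  by (cases rule: pair_swap_cases[of c s r]) auto

lemma pair_swap_other_parity:
  assumes "s mod 2 \<noteq> c mod 2"
  shows "pair_swap c r s = s"
proof -
  have "s mod 4 mod 2 = s mod 2" by (simp add: mod_mod_cancel)
  then have "s mod 4 \<noteq> c" "s mod 4 \<noteq> c + 2" using assms by auto
  then show ?thesis unfolding pair_swap_def by auto
qed

lemma card_pair_swap_lower:
  assumes "c \<le> 1" "4 * r \<le> n"
  shows "card {s. s < n \<and> s < pair_swap c r s} = r"
proof -
  have "{s. s < n \<and> s < pair_swap c r s} = (\<lambda>i. 4 * i + c) ` {..<r}"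
  proof (intro equalityI subsetI)
    fix s assume s: "s \<in> {s. s < n \<and> s < pair_swap c r s}"
    then show "s \<in> (\<lambda>i. 4 * i + c) ` {..<r}"
    proof (cases rule: pair_swap_cases[OF \<open>c \<le> 1\<close>, of s r])
      case 1
      moreover have "s = 4 * (s div 4) + s mod 4" by simp
      ultimately have "s = 4 * (s div 4) + c" "s div 4 < r" by linarith+
      then show ?thesis by blast
    qed (use s in auto)
  next
    fix s assume "s \<in> (\<lambda>i. 4 * i + c) ` {..<r}"
    then obtain i where "i < r" "s = 4 * i + c" by blast
    then show "s \<in> {s. s < n \<and> s < pair_swap c r s}"
      using assms by (auto simp: pair_swap_def)
  qed
  moreover have "inj_on (\<lambda>i. 4 * i + c) {..<r}" by (rule inj_onI) simp
  ultimately show ?thesis by (simp add: card_image)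
qed

lemma pair_swap_zero_triple:
  assumes "i < r" "d \<le> 2"
  shows "pair_swap 0 r (4 * i + d) = 4 * i + (2 - d)"
proof -
  have "(4 * i + d) mod 4 = d" using assms(2) by simp
  moreover have "4 * i + d < 4 * r" using assms by linarith
  ultimately show ?thesis
    using assms(2) unfolding pair_swap_def by (cases "d = 2") auto
qed

text \<open>For even n, pair_swap 1 r moves only odd residues, so it changes only the cells (x, y)
  of the addition table with x odd and y even, while the transposed cells keep the sum x + y.\<close>
definition parity_square :: "nat \<Rightarrow> nat \<Rightarrow> nat \<Rightarrow> nat \<Rightarrow> nat" where
  "parity_square n r x y = (if odd x then pair_swap 1 r ((x + y) mod n) else (x + y) mod n)"

lemma twisted_latin_parity_square:
  assumes "even n" "4 * r \<le> n"
  shows "twisted_latin n (parity_square n r) (pair_swap 1 r)"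
proof (rule twisted_latinI)
  show "parity_square n r x y < n" if "x < n" for x y
    using assms that pair_swap_less[of 1 r n] by (simp add: parity_square_def)
  show "inj_on (parity_square n r x) {..<n}" if "x < n" for x
  proof (cases "odd x")
    case True
    then have "parity_square n r x = pair_swap 1 r \<circ> (\<lambda>y. (x + y) mod n)"
      by (simp add: parity_square_def fun_eq_iff)
    then show ?thesis
      using inj_on_add_mod_lessThan inj_pair_swap[of 1 r]
      by (metis comp_inj_on inj_on_subset le_refl subset_UNIV)
  next
    case False
    then have "parity_square n r x = (\<lambda>y. (x + y) mod n)"
      by (simp add: parity_square_def fun_eq_iff)
    then show ?thesis using inj_on_add_mod_lessThan by simp
  qed
  show "parity_square n r y x = pair_swap 1 r (parity_square n r x y)" for x y
  proof -
    have "even ((x + y) mod n) \<longleftrightarrow> (even x \<longleftrightarrow> even y)"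
      using even_mod_even_iff[OF \<open>even n\<close>] by simp
    then show ?thesis
      using pair_swap_other_parity[of "(x + y) mod n" 1 r] pair_swap_swap[of 1 r]
      by (auto simp: parity_square_def add.commute)
  qed
  show "pair_swap 1 r s < n" if "s < n" for s using assms that by (simp add: pair_swap_less)
  show "pair_swap 1 r (pair_swap 1 r s) = s" for s by (simp add: pair_swap_swap)
qed

definition neg_low :: "nat \<Rightarrow> nat \<Rightarrow> nat" where
  "neg_low m s = (if s < m then (m - s) mod m else s)"

lemma neg_low_neg_low: "neg_low m (neg_low m s) = s"
  unfolding neg_low_def by (cases "s = 0") auto

lemma neg_low_mod: "0 < m \<Longrightarrow> (a + b) mod m = 0 \<Longrightarrow> neg_low m (a mod m) = b mod m"
  unfolding neg_low_def using neg_mod_eq by simp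

lemma neg_low_less: "0 < m \<Longrightarrow> s < m + k \<Longrightarrow> neg_low m s < m + k"
  unfolding neg_low_def by (simp add: trans_less_add1)

lemma card_neg_low_lower: "card {s. s < 2 * r + 1 + k \<and> s < neg_low (2 * r + 1) s} = r"
proof -
  have "s < neg_low (2 * r + 1) s \<longleftrightarrow> s \<in> {1..r}" if "s < 2 * r + 1 + k" for s
  proof (cases "s = 0 \<or> 2 * r + 1 \<le> s")
    case True
    then show ?thesis by (auto simp: neg_low_def)
  next
    case False
    then have "neg_low (2 * r + 1) s = 2 * r + 1 - s" by (simp add: neg_low_def)
    then show ?thesis using False by auto
  qed
  then have "{s. s < 2 * r + 1 + k \<and> s < neg_low (2 * r + 1) s} = {1..r}" by auto
  then show ?thesis by simp
qed

text \<open>Order m + k with m odd and k \<le> m; indices and symbols split into M = {..<m} and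
  K = {m..<m + k}. On M \<times> M this is the subtraction table y - x of Z_m, except that the
  antidiagonals x + y = j (mod m) with j < k carry the symbol m + j of K; the displaced entries
  j - 2x reappear in M \<times> K (negated in K \<times> M), and K \<times> K is an addition table of Z_k.
  Transposition negates the symbols in M and fixes those in K.\<close>
definition glued_square :: "nat \<Rightarrow> nat \<Rightarrow> nat \<Rightarrow> nat \<Rightarrow> nat" where
  "glued_square m k x y =
     (if x < m \<and> y < m then
        (if (x + y) mod m < k then m + (x + y) mod m else (y + m - x) mod m)
      else if x < m then (y + m - 2 * x) mod m
      else if y < m then (2 * y + 2 * m - x) mod m
      else m + (x + y) mod k)"

lemma glued_square_less:
  assumes "0 < m" "x < m + k" "y < m + k"
  shows "glued_square m k x y < m + k"
proof -
  have "z mod m < m + k" for z using \<open>0 < m\<close> by (simp add: trans_less_add1)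
  moreover have "(x + y) mod k < k" if "m \<le> x" using that assms by simp
  ultimately show ?thesis by (auto simp: glued_square_def)
qed

lemma glued_square_transpose:
  assumes "0 < m" "k \<le> m" "x < m + k" "y < m + k"
  shows "glued_square m k y x = neg_low m (glued_square m k x y)"
proof -
  consider "x < m" "y < m" "(x + y) mod m < k" | "x < m" "y < m" "\<not> (x + y) mod m < k"
    | "x < m" "m \<le> y" | "m \<le> x" "y < m" | "m \<le> x" "m \<le> y"
    by linarith
  then show ?thesis
  proof cases
    case 1
    then show ?thesis by (simp add: glued_square_def neg_low_def add.commute)
  next
    case 2
    have "(y + m - x + (x + m - y)) mod m = 0" using 2 by simp
    then have "neg_low m ((y + m - x) mod m) = (x + m - y) mod m"
      by (rule neg_low_mod[OF \<open>0 < m\<close>])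
    then show ?thesis using 2 by (simp add: glued_square_def add.commute[of y x])
  next
    case 3
    have "(y + m - 2 * x + (2 * x + 2 * m - y)) mod m = 0" using 3 assms by simp
    then have "neg_low m ((y + m - 2 * x) mod m) = (2 * x + 2 * m - y) mod m"
      by (rule neg_low_mod[OF \<open>0 < m\<close>])
    then show ?thesis using 3 by (simp add: glued_square_def)
  next
    case 4
    have "(2 * y + 2 * m - x + (x + m - 2 * y)) mod m = 0" using 4 assms by simp
    then have "neg_low m ((2 * y + 2 * m - x) mod m) = (x + m - 2 * y) mod m"
      by (rule neg_low_mod[OF \<open>0 < m\<close>])
    then show ?thesis using 4 by (simp add: glued_square_def)
  next
    case 5
    then show ?thesis by (simp add: glued_square_def neg_low_def add.commute)
  qed
qed

lemma glued_square_low_row: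
  assumes "k \<le> m" "x < m" "y < m + k"
  defines "D \<equiv> if y < m then (x + y) mod m else y - m"
  shows "y < m \<Longrightarrow> D < k \<Longrightarrow> glued_square m k x y = m + D"
    and "\<not> (y < m \<and> D < k) \<Longrightarrow>
      glued_square m k x y < m \<and> (glued_square m k x y + 2 * x) mod m = D"
proof -
  show "y < m \<Longrightarrow> D < k \<Longrightarrow> glued_square m k x y = m + D"
    using \<open>x < m\<close> by (simp add: glued_square_def D_def)
  assume not_K: "\<not> (y < m \<and> D < k)"
  have "0 < m" using \<open>x < m\<close> by simp
  show "glued_square m k x y < m \<and> (glued_square m k x y + 2 * x) mod m = D"
  proof (cases "y < m")
    case True
    have "(y + m - x) mod m < m" using \<open>0 < m\<close> by simp
    moreover have "((y + m - x) mod m + 2 * x) mod m = (y + m - x + 2 * x) mod m"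
      by (rule mod_add_left_eq)
    moreover have "y + m - x + 2 * x = (x + y) + m" using \<open>x < m\<close> by simp
    ultimately show ?thesis using not_K True \<open>x < m\<close> by (simp add: glued_square_def D_def)
  next
    case False
    have "(y + m - 2 * x) mod m < m" using \<open>0 < m\<close> by simp
    moreover have "((y + m - 2 * x) mod m + 2 * x) mod m = (y + m - 2 * x + 2 * x) mod m"
      by (rule mod_add_left_eq)
    moreover have "y + m - 2 * x + 2 * x = y + m" using False \<open>x < m\<close> by simp
    moreover have "y mod m = y - m" using False assms(1,3) by (simp add: mod_less_double)
    ultimately show ?thesis using False \<open>x < m\<close> by (simp add: glued_square_def D_def)
  qed
qed

lemma glued_square_row_inj_low:
  assumes "k \<le> m" "x < m"
  shows "inj_on (glued_square m k x) {..<m + k}"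
proof -
  define D where "D y = (if y < m then (x + y) mod m else y - m)" for y
  have K: "glued_square m k x y = m + D y" if "y < m" "D y < k" for y
    using glued_square_low_row(1)[OF assms, of y] that unfolding D_def by simp
  have M: "glued_square m k x y < m \<and> (glued_square m k x y + 2 * x) mod m = D y"
    if "y < m + k" "\<not> (y < m \<and> D y < k)" for y
    using glued_square_low_row(2)[OF assms that(1)] that(2) unfolding D_def by simp
  show ?thesis
  proof (rule inj_onI)
    fix y1 y2 assume y1: "y1 \<in> {..<m + k}" and y2: "y2 \<in> {..<m + k}"
      and eq: "glued_square m k x y1 = glued_square m k x y2"
    have kind: "(y < m \<and> D y < k) \<longleftrightarrow> m \<le> glued_square m k x y" if "y < m + k" for y
      using K M[OF that] by fastforce
    have same_kind: "(y1 < m \<and> D y1 < k) \<longleftrightarrow> (y2 < m \<and> D y2 < k)"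
      using kind y1 y2 eq by simp
    have "D y1 = D y2"
    proof (cases "y1 < m \<and> D y1 < k")
      case True
      then show ?thesis using K same_kind eq by simp
    next
      case False
      then show ?thesis using M y1 y2 same_kind eq by (metis lessThan_iff)
    qed
    moreover have "y1 < m \<longleftrightarrow> y2 < m"
    proof -
      have "D y < k" if "\<not> y < m" "y < m + k" for y using that by (simp add: D_def)
      then show ?thesis using same_kind \<open>D y1 = D y2\<close> y1 y2 by (metis lessThan_iff)
    qed
    ultimately show "y1 = y2"
    proof (cases "y1 < m")
      case True
      then have "(x + y1) mod m = (x + y2) mod m" "y2 < m"
        using \<open>D y1 = D y2\<close> \<open>y1 < m \<longleftrightarrow> y2 < m\<close> by (simp_all add: D_def)
      then show ?thesis using True inj_on_add_mod_lessThan[of x m] unfolding inj_on_def by blast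
    next
      case False
      then show ?thesis using \<open>D y1 = D y2\<close> \<open>y1 < m \<longleftrightarrow> y2 < m\<close> by (simp add: D_def)
    qed
  qed
qed

lemma glued_square_row_inj_high:
  assumes "odd m" "k \<le> m" "m \<le> x" "x < m + k"
  shows "inj_on (glued_square m k x) {..<m + k}"
proof -
  have "0 < m" using \<open>odd m\<close> by (cases m) auto
  have M: "glued_square m k x y < m \<and> (glued_square m k x y + x) mod m = (2 * y) mod m"
    if "y < m" for y
  proof -
    have "((2 * y + 2 * m - x) mod m + x) mod m = (2 * y + 2 * m - x + x) mod m"
      by (rule mod_add_left_eq)
    moreover have "2 * y + 2 * m - x + x = 2 * y + 2 * m" using assms by simp
    ultimately show ?thesis using that \<open>m \<le> x\<close> \<open>0 < m\<close> by (simp add: glued_square_def)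
  qed
  have K: "glued_square m k x y = m + (x + y) mod k" if "m \<le> y" for y
    using that \<open>m \<le> x\<close> by (simp add: glued_square_def)
  show ?thesis
  proof (rule inj_onI)
    fix y1 y2 assume y1: "y1 \<in> {..<m + k}" and y2: "y2 \<in> {..<m + k}"
      and eq: "glued_square m k x y1 = glued_square m k x y2"
    show "y1 = y2"
    proof (cases "y1 < m")
      case True
      then have "y2 < m" using M K eq y2 by (metis le_add1 not_less)
      then show ?thesis
        using mod_double_inj[OF \<open>odd m\<close> True] M[OF True] M eq by metis
    next
      case False
      then have "m \<le> y2" using M K eq by (metis le_add1 not_less)
      then show ?thesis
        using inj_on_add_mod[of x k m] K[OF \<open>m \<le> y2\<close>] K False eq y1 y2
        unfolding inj_on_def by (simp add: not_less)
    qed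
  qed
qed

lemma twisted_latin_glued_square:
  assumes "odd m" "k \<le> m"
  shows "twisted_latin (m + k) (glued_square m k) (neg_low m)"
proof -
  have "0 < m" using \<open>odd m\<close> by (cases m) auto
  show ?thesis
  proof (rule twisted_latinI)
    show "glued_square m k x y < m + k" if "x < m + k" "y < m + k" for x y
      using glued_square_less \<open>0 < m\<close> that by blast
    show "inj_on (glued_square m k x) {..<m + k}" if "x < m + k" for x
      using glued_square_row_inj_low glued_square_row_inj_high assms that by (metis not_less)
    show "glued_square m k y x = neg_low m (glued_square m k x y)" if "x < m + k" "y < m + k" for x y
      using glued_square_transpose \<open>0 < m\<close> assms that by blast
    show "neg_low m s < m + k" if "s < m + k" for s
      using neg_low_less \<open>0 < m\<close> that by blast
    show "neg_low m (neg_low m s) = s" for s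
      by (rule neg_low_neg_low)
  qed
qed

definition in_triple :: "nat \<Rightarrow> nat \<Rightarrow> bool" where
  "in_triple r s \<longleftrightarrow> s < 4 * r \<and> s mod 4 \<noteq> 3"

definition triple_offset :: "nat \<Rightarrow> nat \<Rightarrow> nat" where
  "triple_offset t j =
     (if j = 0 then (if t = 0 then 1 else if odd t then 2 else 0)
      else if j = 1 then (if t = 0 then 2 else if t = 1 then 0 else 1)
      else (if t = 1 then 1 else if t = 0 \<or> odd t then 0 else 2))"

text \<open>For odd n each symbol of the addition table of Z_n occurs once on the diagonal. For i < r
  the three antidiagonals x + y = 4i + j (j \<le> 2) are refilled with the symbols
  4i + triple_offset t j, where t = x - 2i (mod n); then only 4i + 1 lies on the diagonal there,
  and transposition exchanges 4i and 4i + 2.\<close>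
definition triple_square :: "nat \<Rightarrow> nat \<Rightarrow> nat \<Rightarrow> nat \<Rightarrow> nat" where
  "triple_square n r x y =
     (let s = (x + y) mod n
      in if in_triple r s
         then 4 * (s div 4) + triple_offset ((x + n - 2 * (s div 4)) mod n) (s mod 4)
         else s)"

lemma triple_offset_le: "triple_offset t j \<le> 2"
  unfolding triple_offset_def by auto

lemma triple_offset_inj: "j1 \<le> 2 \<Longrightarrow> j2 \<le> 2 \<Longrightarrow> triple_offset t j1 = triple_offset t j2 \<Longrightarrow> j1 = j2"
  unfolding triple_offset_def by (auto split: if_splits)

lemma triple_offset_transpose:
  assumes "odd n" "t < n" "w < n" "j \<le> 2" and "t + w = j \<or> t + w = j + n"
  shows "triple_offset w j = 2 - triple_offset t j"
proof -
  consider "t + w = j" | "t + w = j + n" using assms(5) by blast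
  then show ?thesis
  proof cases
    case 1
    then have "t \<in> {0, 1, 2}" "w \<in> {0, 1, 2}" using \<open>j \<le> 2\<close> by auto
    then show ?thesis using 1 \<open>j \<le> 2\<close>
      by (elim insertE emptyE) (simp_all add: triple_offset_def)
  next
    case 2
    have "even (t + w) \<longleftrightarrow> even (j + n)" using 2 by simp
    then have parity: "odd t \<longleftrightarrow> (even w \<longleftrightarrow> even j)" using \<open>odd n\<close> by auto
    have "j < t" "j < w" using 2 assms by linarith+
    consider (j0) "j = 0" | (j1) "j = 1" | (j2) "j = 2" using \<open>j \<le> 2\<close> by linarith
    then show ?thesis
    proof cases
      case j0
      then have "odd w \<longleftrightarrow> even t" using parity by auto
      then show ?thesis using j0 \<open>j < t\<close> \<open>j < w\<close> by (cases "odd t") (simp_all add: triple_offset_def)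
    next
      case j1
      then show ?thesis using \<open>j < t\<close> \<open>j < w\<close> by (simp add: triple_offset_def)
    next
      case j2
      then have "odd w \<longleftrightarrow> even t" using parity by auto
      then show ?thesis using j2 \<open>j < t\<close> \<open>j < w\<close> by (cases "odd t") (simp_all add: triple_offset_def)
    qed
  qed
qed

lemma triple_square_in_triple:
  assumes "in_triple r ((x + y) mod n)"
  defines "s \<equiv> (x + y) mod n"
  shows "triple_square n r x y div 4 = s div 4"
    and "triple_square n r x y mod 4 = triple_offset ((x + n - 2 * (s div 4)) mod n) (s mod 4)"
    and "in_triple r (triple_square n r x y)"
proof -
  define d where "d = triple_offset ((x + n - 2 * (s div 4)) mod n) (s mod 4)"
  have val: "triple_square n r x y = 4 * (s div 4) + d"
    using assms(1) by (simp add: triple_square_def s_def d_def Let_def)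
  have "d \<le> 2" unfolding d_def by (rule triple_offset_le)
  then show "triple_square n r x y div 4 = s div 4" "triple_square n r x y mod 4 = d"
    unfolding val by simp_all
  have "s div 4 < r" using assms(1) unfolding in_triple_def s_def by linarith
  then show "in_triple r (triple_square n r x y)"
    using \<open>d \<le> 2\<close> unfolding val in_triple_def by simp
qed

lemma triple_square_not_in_triple:
  "\<not> in_triple r ((x + y) mod n) \<Longrightarrow> triple_square n r x y = (x + y) mod n"
  by (simp add: triple_square_def)

lemma triple_square_less:
  assumes "4 * r < n" "x < n"
  shows "triple_square n r x y < n"
proof (cases "in_triple r ((x + y) mod n)")
  case True
  then show ?thesis
    using triple_square_in_triple(3)[OF True] assms(1) unfolding in_triple_def by linarith
next
  case False
  then show ?thesis using assms(2) by (simp add: triple_square_not_in_triple)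
qed

lemma in_triple_triple_square:
  "in_triple r (triple_square n r x y) \<longleftrightarrow> in_triple r ((x + y) mod n)"
  using triple_square_in_triple(3) triple_square_not_in_triple by metis

lemma triple_square_row_inj:
  assumes "x < n"
  shows "inj_on (triple_square n r x) {..<n}"
proof (rule inj_onI)
  fix y1 y2 assume y1: "y1 \<in> {..<n}" and y2: "y2 \<in> {..<n}"
    and eq: "triple_square n r x y1 = triple_square n r x y2"
  define s1 s2 where "s1 = (x + y1) mod n" and "s2 = (x + y2) mod n"
  have "s1 = s2"
  proof (cases "in_triple r s1")
    case True
    then have "in_triple r s2"
      using eq in_triple_triple_square unfolding s1_def s2_def by metis
    have "s1 div 4 = s2 div 4"
      using triple_square_in_triple(1) True \<open>in_triple r s2\<close> eq unfolding s1_def s2_def by metis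
    moreover have "s1 mod 4 = s2 mod 4"
    proof (rule triple_offset_inj)
      show "s1 mod 4 \<le> 2" "s2 mod 4 \<le> 2"
        using True \<open>in_triple r s2\<close> unfolding in_triple_def by auto
      show "triple_offset ((x + n - 2 * (s1 div 4)) mod n) (s1 mod 4) =
          triple_offset ((x + n - 2 * (s1 div 4)) mod n) (s2 mod 4)"
        using triple_square_in_triple(2) True \<open>in_triple r s2\<close> eq \<open>s1 div 4 = s2 div 4\<close>
        unfolding s1_def s2_def by metis
    qed
    ultimately show ?thesis by (metis div_mult_mod_eq)
  next
    case False
    then have "\<not> in_triple r s2"
      using eq in_triple_triple_square unfolding s1_def s2_def by metis
    then show ?thesis
      using False eq triple_square_not_in_triple unfolding s1_def s2_def by metis
  qed
  then show "y1 = y2"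
    using inj_on_add_mod_lessThan[of x n] y1 y2 unfolding s1_def s2_def inj_on_def by blast
qed

lemma triple_square_transpose:
  assumes "odd n" "4 * r < n" "x < n" "y < n"
  shows "triple_square n r y x = pair_swap 0 r (triple_square n r x y)"
proof (cases "in_triple r ((x + y) mod n)")
  case True
  define s i j where "s = (x + y) mod n" and "i = s div 4" and "j = s mod 4"
  have "j \<le> 2" "i < r" using True unfolding in_triple_def s_def i_def j_def by linarith+
  have "s = 2 * (2 * i) + j" unfolding i_def j_def by simp
  then have sum: "(x + n - 2 * i) mod n + (y + n - 2 * i) mod n = j \<or>
      (x + n - 2 * i) mod n + (y + n - 2 * i) mod n = j + n"
    using mod_shift_sum_cases[OF assms(3,4)] unfolding s_def by simp
  have "0 < n" using assms(3) by simp
  have "triple_offset ((y + n - 2 * i) mod n) j = 2 - triple_offset ((x + n - 2 * i) mod n) j"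
    using triple_offset_transpose[OF \<open>odd n\<close> _ _ \<open>j \<le> 2\<close> sum] \<open>0 < n\<close> by simp
  moreover have "triple_square n r x y = 4 * i + triple_offset ((x + n - 2 * i) mod n) j"
    using True by (simp add: triple_square_def Let_def s_def i_def j_def)
  moreover have "triple_square n r y x = 4 * i + triple_offset ((y + n - 2 * i) mod n) j"
    using True by (simp add: triple_square_def Let_def s_def i_def j_def add.commute)
  ultimately show ?thesis
    using pair_swap_zero_triple[OF \<open>i < r\<close> triple_offset_le] by simp
next
  case False
  then have "pair_swap 0 r ((x + y) mod n) = (x + y) mod n"
    unfolding in_triple_def pair_swap_def by auto
  then show ?thesis
    using False triple_square_not_in_triple[of r y x n] by (simp add: triple_square_def add.commute)
qed

lemma twisted_latin_triple_square:
  assumes "odd n" "4 * r < n"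
  shows "twisted_latin n (triple_square n r) (pair_swap 0 r)"
proof (rule twisted_latinI)
  show "triple_square n r x y < n" if "x < n" for x y
    using triple_square_less assms that by blast
  show "inj_on (triple_square n r x) {..<n}" if "x < n" for x
    using triple_square_row_inj that by blast
  show "triple_square n r y x = pair_swap 0 r (triple_square n r x y)" if "x < n" "y < n" for x y
    using triple_square_transpose assms that by blast
  show "pair_swap 0 r s < n" if "s < n" for s
    using pair_swap_less[of 0 r n s] assms that by simp
  show "pair_swap 0 r (pair_swap 0 r s) = s" for s
    by (simp add: pair_swap_swap)
qed

lemma twisted_latin_exists:
  assumes "2 * r < n"
  obtains l g where "twisted_latin n l g" and "card {s. s < n \<and> s < g s} = r"
proof (cases "n \<le> 4 * r + 2")
  case True
  define k where "k = n - (2 * r + 1)"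
  have "k \<le> 2 * r + 1" and n: "n = 2 * r + 1 + k" using True assms unfolding k_def by linarith+
  have "twisted_latin n (glued_square (2 * r + 1) k) (neg_low (2 * r + 1))"
    unfolding n by (rule twisted_latin_glued_square) (simp, fact)
  moreover have "card {s. s < n \<and> s < neg_low (2 * r + 1) s} = r"
    unfolding n by (rule card_neg_low_lower)
  ultimately show ?thesis by (rule that)
next
  case False
  then have "4 * r < n" by linarith
  show ?thesis
  proof (cases "even n")
    case True
    then have "twisted_latin n (parity_square n r) (pair_swap 1 r)"
      using \<open>4 * r < n\<close> by (intro twisted_latin_parity_square) simp_all
    moreover have "card {s. s < n \<and> s < pair_swap 1 r s} = r"
      using \<open>4 * r < n\<close> by (intro card_pair_swap_lower) simp_all
    ultimately show ?thesis by (rule that)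
  next
    case False
    then have "twisted_latin n (triple_square n r) (pair_swap 0 r)"
      using \<open>4 * r < n\<close> by (rule twisted_latin_triple_square)
    moreover have "card {s. s < n \<and> s < pair_swap 0 r s} = r"
      using \<open>4 * r < n\<close> by (intro card_pair_swap_lower) simp_all
    ultimately show ?thesis by (rule that)
  qed
qed

theorem theorem4p7:
  fixes n :: nat and \<gamma> :: "nat \<Rightarrow> nat"
  assumes "n \<ge> 1"
    and "\<gamma> permutes {1..n}"
  shows "in_Par12 n id id \<gamma> \<longleftrightarrow> (\<gamma> \<circ> \<gamma> = id \<and> (\<exists>x\<in>{1..n}. \<gamma> x = x))"
proof
  assume "in_Par12 n id id \<gamma>"
  then show "\<gamma> \<circ> \<gamma> = id \<and> (\<exists>x\<in>{1..n}. \<gamma> x = x)"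
    using in_Par12_imp_involution assms by blast
next
  assume "\<gamma> \<circ> \<gamma> = id \<and> (\<exists>x\<in>{1..n}. \<gamma> x = x)"
  then have inv: "\<gamma> \<circ> \<gamma> = id" and "{x\<in>{1..n}. \<gamma> x = x} \<noteq> {}" by auto
  define r where "r = card {x\<in>{1..n}. x < \<gamma> x}"
  have "\<forall>x\<in>{1..n}. \<gamma> x \<in> {1..n} \<and> \<gamma> (\<gamma> x) = x"
    using permutes_in_image[OF assms(2)] inv by (simp add: pointfree_idE)
  then have "n = card {x\<in>{1..n}. \<gamma> x = x} + 2 * r"
    using card_involution[of "{1..n}" \<gamma>] unfolding r_def by simp
  moreover have "card {x\<in>{1..n}. \<gamma> x = x} \<noteq> 0"
    using \<open>{x\<in>{1..n}. \<gamma> x = x} \<noteq> {}\<close> by simp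
  ultimately have "2 * r < n" by linarith
  then obtain l g where "twisted_latin n l g" and "card {s. s < n \<and> s < g s} = r"
    by (rule twisted_latin_exists)
  then show "in_Par12 n id id \<gamma>"
    using in_Par12_of_twisted_latin[OF _ assms(2) inv] unfolding r_def by metis
qed

end
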